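(* Let $F$ be a field, $V$ a nonzero vector space over $F$, $\Gamma$ a nonempty set, $\varphi:\Gamma\to\Gamma$ a map and $\mathfrak{w}\in F^\Gamma$, and let $\sigma_{\varphi,\mathfrak{w}}:V^\Gamma\to V^\Gamma$, $(x_\alpha)_{\alpha\in\Gamma}\mapsto(\mathfrak{w}_\alpha x_{\varphi(\alpha)})_{\alpha\in\Gamma}$. If $\downarrow\mathfrak{Z}=\Gamma$, then ${\rm Eigen}(\sigma_{\varphi,\mathfrak{w}},V^\Gamma)\subseteq\{0\}$; moreover in this case ${\rm Eigen}(\sigma_{\varphi,\mathfrak{w}},V^\Gamma)=\varnothing$ if $\varphi(\Gamma\setminus\mathfrak{Z})=\Gamma$, and ${\rm Eigen}(\sigma_{\varphi,\mathfrak{w}},V^\Gamma)=\{0\}$ otherwise.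
   Context: For a linear map $T:W\to W$ on an $F$-vector space $W$, ${\rm Eigen}(T,W)$ is the set of all $r\in F$ such that $T(x)=rx$ for some nonzero $x\in W$. $\mathfrak{Z}:=\{\alpha\in\Gamma:\mathfrak{w}_\alpha=0\}$ and $\downarrow\mathfrak{Z}:=\bigcup_{n\geq0}\varphi^{-n}(\mathfrak{Z})$. *)

theory Defs
  imports Main HOL.Vector_Spaces "HOL-Library.Function_Algebras"
begin

definition Eigen :: "('f \<Rightarrow> 'w \<Rightarrow> 'w) \<Rightarrow> ('w::zero \<Rightarrow> 'w) \<Rightarrow> 'w set \<Rightarrow> 'f set" where
  "Eigen scale T W = {r. \<exists>x\<in>W. x \<noteq> 0 \<and> T x = scale r x}"

definition fun_scale :: "('f \<Rightarrow> 'v \<Rightarrow> 'v) \<Rightarrow> 'f \<Rightarrow> ('g \<Rightarrow> 'v) \<Rightarrow> ('g \<Rightarrow> 'v)" where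
  "fun_scale scale r x = (\<lambda>\<alpha>. scale r (x \<alpha>))"

definition wshift :: "('f \<Rightarrow> 'v \<Rightarrow> 'v) \<Rightarrow> ('g \<Rightarrow> 'g) \<Rightarrow> ('g \<Rightarrow> 'f) \<Rightarrow> ('g \<Rightarrow> 'v) \<Rightarrow> ('g \<Rightarrow> 'v)" where
  "wshift scale \<phi> w x = (\<lambda>\<alpha>. scale (w \<alpha>) (x (\<phi> \<alpha>)))"

definition Zset :: "('g \<Rightarrow> 'f::zero) \<Rightarrow> 'g set" where
  "Zset w = {\<alpha>. w \<alpha> = 0}"

definition downZ :: "('g \<Rightarrow> 'g) \<Rightarrow> ('g \<Rightarrow> 'f::zero) \<Rightarrow> 'g set" where
  "downZ \<phi> w = (\<Union>n. (\<phi> ^^ n) -` Zset w)"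

end

theory Submission
  imports Defs
begin

(* For a nonzero eigenvalue r, the eigenvector equation r x(a) = w(a) x(phi a) forces
   x(a) = 0 as soon as w vanishes somewhere on the forward phi-orbit of a; so if every orbit
   meets the zero set Z of w, there is no nonzero eigenvalue. For r = 0 the equation says
   that x vanishes on phi(Gamma - Z), and a vector supported at a single point outside that
   image lies in the kernel. *)

lemma wshift_eq_fun_scale_iff:
  "wshift scale \<phi> w x = fun_scale scale r x \<longleftrightarrow> (\<forall>\<alpha>. scale (w \<alpha>) (x (\<phi> \<alpha>)) = scale r (x \<alpha>))"
  by (auto simp: wshift_def fun_scale_def fun_eq_iff)

context vector_space
begin

lemma eigenvector_wshift_vanishes_on_downZ:
  assumes "r \<noteq> 0"
    and eigen: "wshift scale \<phi> w x = fun_scale scale r x"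
    and "\<alpha> \<in> downZ \<phi> w"
  shows "x \<alpha> = 0"
proof -
  have step: "scale (w \<beta>) (x (\<phi> \<beta>)) = scale r (x \<beta>)" for \<beta>
    using eigen by (simp add: wshift_eq_fun_scale_iff)
  have "w ((\<phi> ^^ n) \<beta>) = 0 \<Longrightarrow> x \<beta> = 0" for n \<beta>
  proof (induction n arbitrary: \<beta>)
    case 0
    then show ?case using step[of \<beta>] \<open>r \<noteq> 0\<close> by simp
  next
    case (Suc n)
    then have "x (\<phi> \<beta>) = 0" by (simp add: funpow_Suc_right del: funpow.simps)
    then show ?case using step[of \<beta>] \<open>r \<noteq> 0\<close> by simp
  qed
  moreover obtain n where "w ((\<phi> ^^ n) \<alpha>) = 0"
    using \<open>\<alpha> \<in> downZ \<phi> w\<close> by (auto simp: downZ_def Zset_def)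
  ultimately show ?thesis by blast
qed

lemma Eigen_wshift_subset_zero:
  assumes "downZ \<phi> w = UNIV"
  shows "Eigen (fun_scale scale) (wshift scale \<phi> w) UNIV \<subseteq> {0}"
proof
  fix r assume "r \<in> Eigen (fun_scale scale) (wshift scale \<phi> w) UNIV"
  then obtain x where "x \<noteq> 0" and eigen: "wshift scale \<phi> w x = fun_scale scale r x"
    by (auto simp: Eigen_def)
  show "r \<in> {0}"
  proof (rule ccontr)
    assume "r \<notin> {0}"
    then have "x \<alpha> = 0" for \<alpha>
      using eigenvector_wshift_vanishes_on_downZ[OF _ eigen] assms by auto
    with \<open>x \<noteq> 0\<close> show False by (simp add: fun_eq_iff)
  qed
qed

lemma zero_in_Eigen_wshift_iff:
  assumes "\<exists>v::'b. v \<noteq> 0"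
  shows "0 \<in> Eigen (fun_scale scale) (wshift scale \<phi> w) UNIV \<longleftrightarrow> \<phi> ` (UNIV - Zset w) \<noteq> UNIV"
proof
  assume "0 \<in> Eigen (fun_scale scale) (wshift scale \<phi> w) UNIV"
  then obtain x where "x \<noteq> 0" and kernel: "\<And>\<alpha>. scale (w \<alpha>) (x (\<phi> \<alpha>)) = 0"
    by (auto simp: Eigen_def wshift_eq_fun_scale_iff)
  then obtain \<beta> where "x \<beta> \<noteq> 0" by (auto simp: fun_eq_iff)
  have "\<beta> \<notin> \<phi> ` (UNIV - Zset w)"
  proof
    assume "\<beta> \<in> \<phi> ` (UNIV - Zset w)"
    then obtain \<alpha> where "w \<alpha> \<noteq> 0" "\<beta> = \<phi> \<alpha>" by (auto simp: Zset_def)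
    with kernel[of \<alpha>] \<open>x \<beta> \<noteq> 0\<close> show False by simp
  qed
  then show "\<phi> ` (UNIV - Zset w) \<noteq> UNIV" by blast
next
  assume "\<phi> ` (UNIV - Zset w) \<noteq> UNIV"
  then obtain \<beta> where \<beta>: "\<beta> \<notin> \<phi> ` (UNIV - Zset w)" by blast
  obtain v :: 'b where "v \<noteq> 0" using assms by blast
  define x where "x = (\<lambda>\<gamma>. if \<gamma> = \<beta> then v else 0)"
  have "x \<noteq> 0" using \<open>v \<noteq> 0\<close> by (auto simp: x_def fun_eq_iff)
  moreover have "scale (w \<alpha>) (x (\<phi> \<alpha>)) = scale 0 (x \<alpha>)" for \<alpha>
  proof (cases "\<phi> \<alpha> = \<beta>")
    case True
    then have "w \<alpha> = 0" using \<beta> by (auto simp: Zset_def)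
    then show ?thesis by simp
  next
    case False
    then show ?thesis by (simp add: x_def)
  qed
  ultimately show "0 \<in> Eigen (fun_scale scale) (wshift scale \<phi> w) UNIV"
    by (auto simp: Eigen_def wshift_eq_fun_scale_iff)
qed

end

theorem lemma2p2:
  fixes scale :: "'f::field \<Rightarrow> 'v::ab_group_add \<Rightarrow> 'v"
    and \<phi> :: "'g \<Rightarrow> 'g" and w :: "'g \<Rightarrow> 'f"
  assumes "vector_space scale"
    and "\<exists>v::'v. v \<noteq> 0"
    and "downZ \<phi> w = UNIV"
  shows "Eigen (fun_scale scale) (wshift scale \<phi> w) UNIV \<subseteq> {0}
    \<and> (\<phi> ` (UNIV - Zset w) = UNIV \<longrightarrow> Eigen (fun_scale scale) (wshift scale \<phi> w) UNIV = {})
    \<and> (\<phi> ` (UNIV - Zset w) \<noteq> UNIV \<longrightarrow> Eigen (fun_scale scale) (wshift scale \<phi> w) UNIV = {0})"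
proof -
  interpret vector_space scale by fact
  have "Eigen (fun_scale scale) (wshift scale \<phi> w) UNIV \<subseteq> {0}"
    using Eigen_wshift_subset_zero assms(3) .
  moreover have "0 \<in> Eigen (fun_scale scale) (wshift scale \<phi> w) UNIV \<longleftrightarrow> \<phi> ` (UNIV - Zset w) \<noteq> UNIV"
    using zero_in_Eigen_wshift_iff assms(2) .
  ultimately show ?thesis by blast
qed

end
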